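(* Let $n\ge2$, $\mathbb{Z}_n=\mathbb{Z}/n\mathbb{Z}$, $\mathcal{P}=\{(x_1,\dots,x_{n-1})\in\mathbb{Z}_n^{n-1}\mid x_1,\dots,x_{n-1}\text{ pairwise different}\}$ and $\mathcal{S}=\{r\in\mathbb{Z}_n^{n-1}\mid\exists\,x,y\in\mathcal{P}: r=x+y\}$. If $r=(r_1,\dots,r_{n-1})\in\mathbb{Z}_n^{n-1}$ satisfies $|\{r_1,\dots,r_{n-1}\}|\le2$, then $r\in\mathcal{S}$. *)

theory Defs
  imports Main
begin

text \<open>Elements of Z_n are represented by their canonical representatives in {0..<n} (type int);
  vectors in Z_n^(n-1) are lists of length n-1 with entries in {0..<n}.\<close>

definition Zn_vecs :: "int \<Rightarrow> int list set" where
  "Zn_vecs n = {x. length x = nat n - 1 \<and> set x \<subseteq> {0..<n}}"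

definition Zn_add :: "int \<Rightarrow> int list \<Rightarrow> int list \<Rightarrow> int list" where
  "Zn_add n x y = map2 (\<lambda>a b. (a + b) mod n) x y"

definition perm_set :: "int \<Rightarrow> int list set" where
  "perm_set n = {x \<in> Zn_vecs n. distinct x}"

definition sum_set :: "int \<Rightarrow> int list set" where
  "sum_set n = {r \<in> Zn_vecs n. \<exists>x \<in> perm_set n. \<exists>y \<in> perm_set n. r = Zn_add n x y}"

end

theory Submission
  imports Defs
begin

text \<open>Let r take the value a on the positions I and b on the positions J, and put d = b - a.
  Choose a set X of |I| residues with X + d \<subseteq> X \<union> {z} for a single point z \<notin> X; then
  n - 1 - |I| = |J| residues remain outside X \<union> {z}. Let the permutation x send I into X and
  J injectively into the remaining residues. Then y = r - x is injective: within I and within J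
  because x is, and across, because a - x_i = b - x_j would force x_j = x_i + d \<in> X \<union> {z}.\<close>

lemma almost_invariant_subset_exists:
  assumes "finite S" "f ` S \<subseteq> S" "k < card S"
  shows "\<exists>z X. z \<in> S \<and> X \<subseteq> S \<and> z \<notin> X \<and> card X = k \<and> f ` X \<subseteq> insert z X"
  using assms(3)
proof (induction k)
  case 0
  then obtain z where "z \<in> S" using card.empty by fastforce
  then show ?case by (intro exI[of _ z] exI[of _ "{}"]) auto
next
  case (Suc k)
  then obtain z X where zX: "z \<in> S" "X \<subseteq> S" "z \<notin> X" "card X = k" "f ` X \<subseteq> insert z X"
    by auto
  define X' where "X' = insert z X"
  have "finite X" using zX(2) assms(1) finite_subset by blast
  then have card_X': "card X' = Suc k" using zX unfolding X'_def by simp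
  have X'_sub: "X' \<subseteq> S" using zX unfolding X'_def by auto
  have "\<exists>z'. z' \<in> S \<and> z' \<notin> X' \<and> f z \<in> insert z' X'"
  proof (cases "f z \<in> X'")
    case False
    then show ?thesis using assms(2) zX(1) by blast
  next
    case True
    have "X' \<noteq> S" using card_X' Suc.prems by auto
    then obtain z' where "z' \<in> S" "z' \<notin> X'" using X'_sub by blast
    then show ?thesis using True by blast
  qed
  then obtain z' where "z' \<in> S" "z' \<notin> X'" "f z \<in> insert z' X'" by blast
  moreover have "f ` X' \<subseteq> insert z' X'" using calculation(3) zX(5) unfolding X'_def by auto
  ultimately show ?case using X'_sub card_X' by blast
qed

lemma injection_avoiding_map:
  assumes "finite S" "f ` S \<subseteq> S" "finite I" "finite J" "I \<inter> J = {}"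
    and "card I + card J < card S"
  obtains F where "inj_on F (I \<union> J)" "F ` (I \<union> J) \<subseteq> S"
    "\<And>i j. i \<in> I \<Longrightarrow> j \<in> J \<Longrightarrow> F j \<noteq> f (F i)"
proof -
  obtain z X where zX: "z \<in> S" "X \<subseteq> S" "z \<notin> X" "card X = card I" "f ` X \<subseteq> insert z X"
    using almost_invariant_subset_exists[OF assms(1,2), of "card I"] assms(6) by auto
  define Y where "Y = S - insert z X"
  have "finite X" using zX(2) assms(1) finite_subset by blast
  then have "card Y = card S - Suc (card I)"
    unfolding Y_def using zX by (simp add: card_Diff_subset)
  then have "card J \<le> card Y" using assms(6) by linarith
  then obtain g where g: "g ` J \<subseteq> Y" "inj_on g J"
    using card_le_inj[OF assms(4)] assms(1) unfolding Y_def by blast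
  obtain h where h: "bij_betw h I X"
    using finite_same_card_bij[OF assms(3) \<open>finite X\<close>] zX(4) by metis
  define F where "F i = (if i \<in> I then h i else g i)" for i
  have F_I: "F i \<in> X" if "i \<in> I" for i
    using that h unfolding F_def bij_betw_def by auto
  have F_J: "F j \<in> Y" if "j \<in> J" for j
    using that g assms(5) unfolding F_def by auto
  show thesis
  proof
    have "inj_on F I" using h unfolding F_def bij_betw_def inj_on_def by auto
    moreover have "inj_on F J" using g assms(5) unfolding F_def inj_on_def by auto
    moreover have "F ` I \<inter> F ` J = {}" using F_I F_J unfolding Y_def by fastforce
    ultimately show "inj_on F (I \<union> J)" by (auto simp: inj_on_Un)
    show "F ` (I \<union> J) \<subseteq> S" using F_I F_J zX(2) unfolding Y_def by blast
    show "F j \<noteq> f (F i)" if "i \<in> I" "j \<in> J" for i j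
      using F_I[OF that(1)] F_J[OF that(2)] zX(5) unfolding Y_def by blast
  qed
qed

lemma diff_mod_eq_imp_shift:
  fixes n :: int
  assumes "v \<in> {0..<n}" "(c - u) mod n = (e - v) mod n"
  shows "v = (u + (e - c)) mod n"
proof -
  have "v mod n = (u + (e - c)) mod n"
    using assms(2) by (metis (no_types, lifting) add.commute diff_add_cancel diff_diff_eq2 mod_diff_right_eq mod_add_right_eq)
  then show ?thesis using assms(1) by simp
qed

lemma in_sum_setI:
  fixes n :: int
  assumes r: "r \<in> Zn_vecs n" and "n > 0"
    and F: "inj_on F {..<length r}" "F ` {..<length r} \<subseteq> {0..<n}"
    and G: "inj_on (\<lambda>i. (r ! i - F i) mod n) {..<length r}"
  shows "r \<in> sum_set n"
proof -
  define x where "x = map F [0..<length r]"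
  define y where "y = map (\<lambda>i. (r ! i - F i) mod n) [0..<length r]"
  have "x \<in> perm_set n" "y \<in> perm_set n"
    using r F G \<open>n > 0\<close> unfolding perm_set_def Zn_vecs_def x_def y_def
    by (auto simp: distinct_map atLeast0LessThan)
  moreover have "r = Zn_add n x y"
  proof (rule nth_equalityI)
    show "length r = length (Zn_add n x y)" unfolding Zn_add_def x_def y_def by simp
  next
    fix i assume i: "i < length r"
    then have "r ! i \<in> {0..<n}" using r nth_mem unfolding Zn_vecs_def by blast
    then show "r ! i = Zn_add n x y ! i"
      using i unfolding Zn_add_def x_def y_def by (simp add: mod_add_right_eq)
  qed
  ultimately show ?thesis using r unfolding sum_set_def by blast
qed

lemma inj_on_diff_mod_two_valued:
  fixes n a b :: int and r F :: "'i \<Rightarrow> int"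
  assumes F: "inj_on F K" "F ` K \<subseteq> {0..<n}"
    and two_values: "r ` K \<subseteq> {a, b}"
    and avoid: "\<And>i j. i \<in> K \<Longrightarrow> j \<in> K \<Longrightarrow> r i = a \<Longrightarrow> r j \<noteq> a \<Longrightarrow> F j \<noteq> (F i + (b - a)) mod n"
  shows "inj_on (\<lambda>i. (r i - F i) mod n) K"
proof (rule inj_onI)
  fix i j assume i: "i \<in> K" and j: "j \<in> K" and eq: "(r i - F i) mod n = (r j - F j) mod n"
  have shift: "F j = (F i + (r j - r i)) mod n" "F i = (F j + (r i - r j)) mod n"
    using diff_mod_eq_imp_shift F(2) i j eq by auto
  show "i = j"
  proof (cases "r i = r j")
    case True
    then have "F j = F i" using shift(1) F(2) i by (auto simp: subset_iff)
    then show ?thesis using F(1) i j inj_on_contraD by fastforce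
  next
    case False
    then consider "r i = a" "r j \<noteq> a" | "r j = a" "r i \<noteq> a" using two_values i j by auto
    then show ?thesis
    proof cases
      case 1
      then show ?thesis using avoid[OF i j] shift(1) two_values j by auto
    next
      case 2
      then show ?thesis using avoid[OF j i] shift(2) two_values i by auto
    qed
  qed
qed

lemma two_valued_in_sum_set:
  fixes n a b :: int
  assumes "n \<ge> 2" and r: "r \<in> Zn_vecs n" and ab: "set r \<subseteq> {a, b}"
  shows "r \<in> sum_set n"
proof -
  define m where "m = length r"
  define f where "f u = (u + (b - a)) mod n" for u
  define I where "I = {i. i < m \<and> r ! i = a}"
  define J where "J = {i. i < m \<and> r ! i \<noteq> a}"
  have IJ: "I \<union> J = {..<m}" "I \<inter> J = {}" unfolding I_def J_def by auto
  have "card I + card J = m"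
    using IJ card_Un_disjoint[of I J] unfolding I_def J_def by simp
  also have "m < card {0..<n}" using r \<open>n \<ge> 2\<close> unfolding m_def Zn_vecs_def by simp
  finally have card_IJ: "card I + card J < card {0..<n}" .
  have "f ` {0..<n} \<subseteq> {0..<n}" using \<open>n \<ge> 2\<close> unfolding f_def by auto
  then obtain F where F: "inj_on F {..<m}" "F ` {..<m} \<subseteq> {0..<n}"
    and avoid: "\<And>i j. i \<in> I \<Longrightarrow> j \<in> J \<Longrightarrow> F j \<noteq> f (F i)"
    using injection_avoiding_map[of "{0..<n}" f I J] card_IJ IJ
    unfolding I_def J_def by auto
  have "(\<lambda>i. r ! i) ` {..<m} \<subseteq> {a, b}" using ab nth_mem unfolding m_def by blast
  then have "inj_on (\<lambda>i. (r ! i - F i) mod n) {..<m}"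
    using inj_on_diff_mod_two_valued[OF F] avoid unfolding I_def J_def f_def by auto
  then show ?thesis
    using in_sum_setI[OF r _ F[unfolded m_def]] \<open>n \<ge> 2\<close> unfolding m_def by simp
qed

lemma card_le_2_subset_pair:
  assumes "finite A" "card A \<le> 2"
  obtains a b where "A \<subseteq> {a, b}"
proof -
  consider "card A = 0" | "card A = 1" | "card A = 2" using assms(2) by linarith
  then show thesis
  proof cases
    case 1
    then show ?thesis using assms(1) that by simp
  next
    case 2
    then show ?thesis using that by (metis card_1_singletonE insert_absorb2 order_refl)
  next
    case 3
    then show ?thesis using that by (metis card_2_iff order_refl)
  qed
qed

theorem proposition5p2:
  fixes n :: int and r :: "int list"
  assumes "n \<ge> 2"
    and "r \<in> Zn_vecs n"
    and "card (set r) \<le> 2"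
  shows "r \<in> sum_set n"
proof -
  obtain a b where "set r \<subseteq> {a, b}"
    using card_le_2_subset_pair[OF finite_set assms(3)] .
  then show ?thesis using two_valued_in_sum_set assms(1,2) by blast
qed

end
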